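(* Let $\mathbb{F}$ be an algebraically closed field with $\mathrm{Char}(\mathbb{F})\ne2$, and let $s,t,z\in\mathbb{F}$ be nonzero with $s^2\neq1$, $t^2\ne1$, $s+t\neq0$, $z\neq1$. Put $\tilde y_1=tz+\frac{1-t^2}{s+t}$ and $\tilde y_2=-sz+\frac{1+st}{s+t}$. Then the pair $A=\begin{pmatrix}0&z&0\\1&0&1-z\\0&1&0\end{pmatrix}$, $A^*=\begin{pmatrix}0&\tilde y_1&0\\ s&0&\tilde y_2\\0&t&0\end{pmatrix}$ is a Leonard pair in $\mathrm{Mat}_3(\mathbb{F})$, and it has a parameter array with $\theta_0=1,\theta_1=0,\theta_2=-1$, $\theta^*_0=1,\theta^*_1=0,\theta^*_2=-1$, $\varphi_1=\varphi_2=\frac{(s-1)(t-1)}{s+t}$, $\phi_1=\phi_2=\frac{(s+1)(t+1)}{s+t}$.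
   Context: A Leonard pair in $\mathrm{Mat}_{d+1}(\mathbb{F})$ is a pair of matrices $A,A^*$ such that there is a basis of $\mathbb{F}^{d+1}$ in which $A$ is irreducible tridiagonal (tridiagonal with all sub/superdiagonal entries nonzero) and $A^*$ diagonal, and a basis in which $A^*$ is irreducible tridiagonal and $A$ diagonal. A Leonard system is $(A,\{E_i\}_{i=0}^d,A^*,\{E^*_i\}_{i=0}^d)$ where $A,A^*$ each have $d+1$ distinct eigenvalues, $\{E_i\},\{E^*_i\}$ are orderings of their primitive idempotents, and $E_iA^*E_j,E^*_iAE^*_j$ are $0$ for $|i-j|>1$ and nonzero for $|i-j|=1$. Eigenvalue sequences: $AE_i=\theta_iE_i$, $A^*E^*_i=\theta^*_iE^*_i$. First split sequence: for nonzero $v\in E^*_0V$, $u_i=(A-\theta_{i-1}I)\cdots(A-\theta_0I)v$ form a basis in which $A^*$ is upper bidiagonal with diagonal $\theta^*_0,\dots,\theta^*_d$ and superdiagonal $\varphi_1,\dots,\varphi_d$. Second split sequence $\{\phi_i\}$: first split sequence of $(A,\{E_{d-i}\},A^*,\{E^*_i\})$. Parameter array $(\{\theta_i\},\{\theta^*_i\},\{\varphi_i\},\{\phi_i\})$; a parameter array of a Leonard pair is that of any associated Leonard system. *)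

theory Defs
  imports "Jordan_Normal_Form.Determinant" "HOL-Computational_Algebra.Polynomial"
begin

definition irred_tridiag :: "nat \<Rightarrow> 'a::field mat \<Rightarrow> bool" where
  "irred_tridiag n B \<longleftrightarrow> B \<in> carrier_mat n n \<and>
     (\<forall>i<n. \<forall>j<n. (i + 1 < j \<or> j + 1 < i) \<longrightarrow> B $$ (i,j) = 0) \<and>
     (\<forall>i. i + 1 < n \<longrightarrow> B $$ (i+1,i) \<noteq> 0 \<and> B $$ (i,i+1) \<noteq> 0)"

definition diag_matrix :: "nat \<Rightarrow> 'a::field mat \<Rightarrow> bool" where
  "diag_matrix n B \<longleftrightarrow> B \<in> carrier_mat n n \<and> (\<forall>i<n. \<forall>j<n. i \<noteq> j \<longrightarrow> B $$ (i,j) = 0)"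

(* The matrix of a linear map X w.r.t. the basis given by the columns of an invertible P
   is P^{-1} X P; we write this as X * P = P * B. *)
definition leonard_pair :: "nat \<Rightarrow> 'a::field mat \<Rightarrow> 'a mat \<Rightarrow> bool" where
  "leonard_pair d A As \<longleftrightarrow> A \<in> carrier_mat (d+1) (d+1) \<and> As \<in> carrier_mat (d+1) (d+1) \<and>
     (\<exists>P B Bs. P \<in> carrier_mat (d+1) (d+1) \<and> det P \<noteq> 0 \<and>
        A * P = P * B \<and> As * P = P * Bs \<and> irred_tridiag (d+1) B \<and> diag_matrix (d+1) Bs) \<and>
     (\<exists>P B Bs. P \<in> carrier_mat (d+1) (d+1) \<and> det P \<noteq> 0 \<and>
        A * P = P * B \<and> As * P = P * Bs \<and> diag_matrix (d+1) B \<and> irred_tridiag (d+1) Bs)"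

fun msum :: "nat \<Rightarrow> (nat \<Rightarrow> 'a::field mat) \<Rightarrow> nat \<Rightarrow> 'a mat" where
  "msum n E 0 = 0\<^sub>m n n"
| "msum n E (Suc k) = E k + msum n E k"

(* E 0..E d is an ordering of the primitive idempotents of A, with A E_i = th_i E_i,
   and A has d+1 distinct eigenvalues th 0..th d (spectral decomposition). *)
definition prim_idem_seq :: "nat \<Rightarrow> 'a::field mat \<Rightarrow> (nat \<Rightarrow> 'a mat) \<Rightarrow> (nat \<Rightarrow> 'a) \<Rightarrow> bool" where
  "prim_idem_seq d A E th \<longleftrightarrow> A \<in> carrier_mat (d+1) (d+1) \<and> inj_on th {..d} \<and>
     (\<forall>i\<le>d. E i \<in> carrier_mat (d+1) (d+1) \<and> E i \<noteq> 0\<^sub>m (d+1) (d+1) \<and> A * E i = th i \<cdot>\<^sub>m E i) \<and>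
     (\<forall>i\<le>d. \<forall>j\<le>d. E i * E j = (if i = j then E i else 0\<^sub>m (d+1) (d+1))) \<and>
     msum (d+1) E (d+1) = 1\<^sub>m (d+1)"

definition leonard_system ::
  "nat \<Rightarrow> 'a::field mat \<Rightarrow> (nat \<Rightarrow> 'a mat) \<Rightarrow> 'a mat \<Rightarrow> (nat \<Rightarrow> 'a mat)
     \<Rightarrow> (nat \<Rightarrow> 'a) \<Rightarrow> (nat \<Rightarrow> 'a) \<Rightarrow> bool" where
  "leonard_system d A E As Es th ths \<longleftrightarrow>
     prim_idem_seq d A E th \<and> prim_idem_seq d As Es ths \<and>
     (\<forall>i\<le>d. \<forall>j\<le>d. (i + 1 < j \<or> j + 1 < i) \<longrightarrow>
        E i * As * E j = 0\<^sub>m (d+1) (d+1) \<and> Es i * A * Es j = 0\<^sub>m (d+1) (d+1)) \<and>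
     (\<forall>i\<le>d. \<forall>j\<le>d. (i + 1 = j \<or> j + 1 = i) \<longrightarrow>
        E i * As * E j \<noteq> 0\<^sub>m (d+1) (d+1) \<and> Es i * A * Es j \<noteq> 0\<^sub>m (d+1) (d+1))"

fun split_vec :: "nat \<Rightarrow> 'a::field mat \<Rightarrow> (nat \<Rightarrow> 'a) \<Rightarrow> 'a vec \<Rightarrow> nat \<Rightarrow> 'a vec" where
  "split_vec n A th v 0 = v"
| "split_vec n A th v (Suc i) = (A - th i \<cdot>\<^sub>m 1\<^sub>m n) *\<^sub>v split_vec n A th v i"

definition upper_bidiag :: "nat \<Rightarrow> (nat \<Rightarrow> 'a::field) \<Rightarrow> (nat \<Rightarrow> 'a) \<Rightarrow> 'a mat" where
  "upper_bidiag n ths ph = mat n n (\<lambda>(i,j). if i = j then ths i else if j = i + 1 then ph j else 0)"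

(* ph 1..d is the first split sequence of the Leonard system (A,E,As,Es) with
   eigenvalue sequences th, ths: for every nonzero v in Es_0 V, the vectors u_0..u_d
   form a basis in which As is upper bidiagonal with diagonal ths and superdiagonal ph. *)
definition first_split_seq ::
  "nat \<Rightarrow> 'a::field mat \<Rightarrow> (nat \<Rightarrow> 'a mat) \<Rightarrow> 'a mat \<Rightarrow> (nat \<Rightarrow> 'a mat)
     \<Rightarrow> (nat \<Rightarrow> 'a) \<Rightarrow> (nat \<Rightarrow> 'a) \<Rightarrow> (nat \<Rightarrow> 'a) \<Rightarrow> bool" where
  "first_split_seq d A E As Es th ths ph \<longleftrightarrow>
     (\<forall>v. v \<in> carrier_vec (d+1) \<longrightarrow> v \<noteq> 0\<^sub>v (d+1) \<longrightarrow> Es 0 *\<^sub>v v = v \<longrightarrow>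
        (let U = mat (d+1) (d+1) (\<lambda>(r,i). split_vec (d+1) A th v i $ r) in
         det U \<noteq> 0 \<and> As * U = U * upper_bidiag (d+1) ths ph))"

definition parameter_array_LS ::
  "nat \<Rightarrow> 'a::field mat \<Rightarrow> (nat \<Rightarrow> 'a mat) \<Rightarrow> 'a mat \<Rightarrow> (nat \<Rightarrow> 'a mat)
     \<Rightarrow> (nat \<Rightarrow> 'a) \<Rightarrow> (nat \<Rightarrow> 'a) \<Rightarrow> (nat \<Rightarrow> 'a) \<Rightarrow> (nat \<Rightarrow> 'a) \<Rightarrow> bool" where
  "parameter_array_LS d A E As Es th ths ph phi \<longleftrightarrow>
     leonard_system d A E As Es th ths \<and>
     first_split_seq d A E As Es th ths ph \<and>
     first_split_seq d A (\<lambda>i. E (d - i)) As Es (\<lambda>i. th (d - i)) ths phi"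

definition parameter_array_LP ::
  "nat \<Rightarrow> 'a::field mat \<Rightarrow> 'a mat
     \<Rightarrow> (nat \<Rightarrow> 'a) \<Rightarrow> (nat \<Rightarrow> 'a) \<Rightarrow> (nat \<Rightarrow> 'a) \<Rightarrow> (nat \<Rightarrow> 'a) \<Rightarrow> bool" where
  "parameter_array_LP d A As th ths ph phi \<longleftrightarrow>
     (\<exists>E Es. parameter_array_LS d A E As Es th ths ph phi)"

end

theory Submission
  imports Defs
begin

(* If the columns of P are eigenvectors of A with eigenvalues \<theta>\<^sub>i and Q = P\<^sup>-\<^sup>1, the
   primitive idempotents of A are E\<^sub>i = P e\<^sub>i\<^sub>i Q, and E\<^sub>i X E\<^sub>j = (Q X P)\<^sub>i\<^sub>j P e\<^sub>i\<^sub>j Q.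
   So the tridiagonality conditions of a Leonard system say exactly that A* is irreducible
   tridiagonal in an eigenbasis of A and vice versa, which is also what makes A, A* a
   Leonard pair. Here both A and A* have eigenvalues 1, 0, -1 with explicit eigenbases.
   Since E*\<^sub>0 has rank one, every nonzero v \<in> E*\<^sub>0 V is a multiple of the first eigenvector
   of A*, and the split relations, being homogeneous in v, reduce to a 3 \<times> 3 computation
   for each of the two orderings of the eigenvalues of A. *)

section \<open>Projections onto the vectors of a basis\<close>

definition single_entry_mat :: "nat \<Rightarrow> nat \<Rightarrow> nat \<Rightarrow> 'a::field mat" where
  "single_entry_mat n i j = mat n n (\<lambda>(r, c). if r = i \<and> c = j then 1 else 0)"

lemma single_entry_mat_carrier [simp]: "single_entry_mat n i j \<in> carrier_mat n n"
  and dim_single_entry_mat [simp]: "dim_row (single_entry_mat n i j) = n" "dim_col (single_entry_mat n i j) = n"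
  by (simp_all add: single_entry_mat_def)

lemma single_entry_mat_mult_left:
  assumes "M \<in> carrier_mat n n" "i < n"
  shows "single_entry_mat n k i * M = mat n n (\<lambda>(r, c). if r = k then M $$ (i, c) else 0)"
  using assms by (auto simp: single_entry_mat_def scalar_prod_def of_bool_def[symmetric])

lemma single_entry_mat_mult_right:
  assumes "M \<in> carrier_mat n n" "j < n"
  shows "M * single_entry_mat n j l = mat n n (\<lambda>(r, c). if c = l then M $$ (r, j) else 0)"
  using assms by (auto simp: single_entry_mat_def scalar_prod_def of_bool_def[symmetric])

lemma single_entry_mat_sandwich:
  assumes "M \<in> carrier_mat n n" "i < n" "j < n"
  shows "single_entry_mat n k i * M * single_entry_mat n j l = M $$ (i, j) \<cdot>\<^sub>m single_entry_mat n k l"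
proof -
  let ?N = "mat n n (\<lambda>(r, c). if r = k then M $$ (i, c) else 0)"
  have "single_entry_mat n k i * M * single_entry_mat n j l = ?N * single_entry_mat n j l"
    using assms by (simp add: single_entry_mat_mult_left)
  also have "\<dots> = M $$ (i, j) \<cdot>\<^sub>m single_entry_mat n k l"
    using assms by (subst single_entry_mat_mult_right) (auto simp: single_entry_mat_def)
  finally show ?thesis .
qed

lemma msum_carrier [simp]:
  "(\<And>i. F i \<in> carrier_mat n n) \<Longrightarrow> msum n F k \<in> carrier_mat n n"
  by (induction k) auto

lemma msum_conjugate:
  assumes "P \<in> carrier_mat n n" "Q \<in> carrier_mat n n" "\<And>i. F i \<in> carrier_mat n n"
  shows "msum n (\<lambda>i. P * F i * Q) k = P * msum n F k * Q"
proof (induction k)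
  case (Suc k)
  have "msum n F k \<in> carrier_mat n n"
    using assms(3) by simp
  with Suc assms show ?case
    by (simp add: mult_add_distrib_mat[of P n n _ n] add_mult_distrib_mat[of _ n n _ _ n]
        assoc_mult_mat[of P n n _ n Q n])
qed (use assms in simp)

lemma msum_diag_single_entry_mat:
  "msum n (\<lambda>i. single_entry_mat n i i) k = mat n n (\<lambda>(r, c). if r = c \<and> r < k then 1 else 0)"
proof (induction k)
  case (Suc k)
  then show ?case by (intro eq_matI) (auto simp: single_entry_mat_def)
qed (auto simp: single_entry_mat_def)

lemma mat_diag_mult_single_entry_mat:
  assumes "i < n"
  shows "mat_diag n \<theta> * single_entry_mat n i j = \<theta> i \<cdot>\<^sub>m single_entry_mat n i j"
  using assms by (subst mat_diag_mult_left[of _ n n]) (auto simp: single_entry_mat_def)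

definition basis_proj :: "nat \<Rightarrow> 'a::field mat \<Rightarrow> 'a mat \<Rightarrow> nat \<Rightarrow> 'a mat" where
  "basis_proj n P Q i = P * single_entry_mat n i i * Q"

context
  fixes n :: nat and P Q :: "'a::field mat"
  assumes P: "P \<in> carrier_mat n n" and Q: "Q \<in> carrier_mat n n"
begin

lemmas mult_carrier_square [simp] = mult_carrier_mat[of _ n n _ n]
lemmas assoc_mult_square = assoc_mult_mat[of _ n n _ n _ n]
lemmas smult_mult_square = mult_smult_distrib[of _ n n _ n] mult_smult_assoc_mat[of _ n n _ n]

lemma basis_proj_carrier [simp]: "basis_proj n P Q i \<in> carrier_mat n n"
  using P Q by (simp add: basis_proj_def)

lemma basis_proj_outer_product:
  assumes "i < n"
  shows "basis_proj n P Q i = mat n n (\<lambda>(r, c). P $$ (r, i) * Q $$ (i, c))"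
  using P Q assms
  by (auto simp: basis_proj_def assoc_mult_square single_entry_mat_mult_left scalar_prod_def
      if_distrib[of "\<lambda>x. _ * x"] cong: if_cong)

lemma basis_proj_mult_vec:
  assumes "i < n" "v \<in> carrier_vec n"
  shows "basis_proj n P Q i *\<^sub>v v = (row Q i \<bullet> v) \<cdot>\<^sub>v col P i"
  using P Q assms
  by (intro eq_vecI) (auto simp: basis_proj_outer_product scalar_prod_def sum_distrib_left mult_ac)

lemma msum_basis_proj:
  assumes "Q * P = 1\<^sub>m n"
  shows "msum n (basis_proj n P Q) n = 1\<^sub>m n"
proof -
  have "msum n (basis_proj n P Q) n = P * msum n (\<lambda>i. single_entry_mat n i i) n * Q"
    using msum_conjugate[OF P Q] by (simp add: basis_proj_def[abs_def])
  also have "msum n (\<lambda>i. single_entry_mat n i i) n = 1\<^sub>m n"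
    by (auto simp: msum_diag_single_entry_mat)
  also have "P * 1\<^sub>m n * Q = 1\<^sub>m n"
    using P mat_mult_left_right_inverse[OF Q P assms] by simp
  finally show ?thesis .
qed

lemma eigen_basis_proj:
  assumes A: "A \<in> carrier_mat n n" and eigen: "A * P = P * mat_diag n \<theta>" and "i < n"
  shows "A * basis_proj n P Q i = \<theta> i \<cdot>\<^sub>m basis_proj n P Q i"
proof -
  have "A * basis_proj n P Q i = (A * P) * single_entry_mat n i i * Q"
    using P Q A by (simp add: basis_proj_def assoc_mult_square)
  also have "\<dots> = P * (mat_diag n \<theta> * single_entry_mat n i i) * Q"
    unfolding eigen using P Q by (simp add: assoc_mult_square)
  also have "\<dots> = P * (\<theta> i \<cdot>\<^sub>m single_entry_mat n i i) * Q"
    using \<open>i < n\<close> by (simp only: mat_diag_mult_single_entry_mat)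
  also have "\<dots> = \<theta> i \<cdot>\<^sub>m basis_proj n P Q i"
    using P Q by (simp add: smult_mult_square basis_proj_def)
  finally show ?thesis .
qed

context
  assumes inverse: "Q * P = 1\<^sub>m n"
begin

lemma basis_proj_sandwich:
  assumes X: "X \<in> carrier_mat n n" and "i < n" "j < n"
  shows "basis_proj n P Q i * X * basis_proj n P Q j = (Q * X * P) $$ (i, j) \<cdot>\<^sub>m (P * single_entry_mat n i j * Q)"
proof -
  define M where "M = Q * X * P"
  have M: "M \<in> carrier_mat n n"
    using P Q X by (simp add: M_def)
  have "basis_proj n P Q i * X * basis_proj n P Q j = P * (single_entry_mat n i i * M * single_entry_mat n j j) * Q"
    using P Q X by (simp add: M_def basis_proj_def assoc_mult_square)
  also have "\<dots> = P * (M $$ (i, j) \<cdot>\<^sub>m single_entry_mat n i j) * Q"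
    using M assms by (simp only: single_entry_mat_sandwich)
  also have "\<dots> = M $$ (i, j) \<cdot>\<^sub>m (P * single_entry_mat n i j * Q)"
    using P Q by (simp add: smult_mult_square)
  finally show ?thesis
    unfolding M_def .
qed

lemma basis_proj_sandwich_eq_0_iff:
  assumes X: "X \<in> carrier_mat n n" and "i < n" "j < n"
  shows "basis_proj n P Q i * X * basis_proj n P Q j = 0\<^sub>m n n \<longleftrightarrow> (Q * X * P) $$ (i, j) = 0"
proof
  define c where "c = (Q * X * P) $$ (i, j)"
  assume vanish: "basis_proj n P Q i * X * basis_proj n P Q j = 0\<^sub>m n n"
  have "Q * (P * single_entry_mat n i j * Q) * P = (Q * P) * single_entry_mat n i j * (Q * P)"
    using P Q by (simp add: assoc_mult_square)
  then have "Q * (c \<cdot>\<^sub>m (P * single_entry_mat n i j * Q)) * P = c \<cdot>\<^sub>m single_entry_mat n i j"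
    using P Q inverse by (simp add: smult_mult_square)
  moreover have "c \<cdot>\<^sub>m (P * single_entry_mat n i j * Q) = 0\<^sub>m n n"
    using basis_proj_sandwich[OF X assms(2,3)] vanish unfolding c_def by metis
  ultimately have "c \<cdot>\<^sub>m single_entry_mat n i j = Q * 0\<^sub>m n n * P"
    by metis
  then have "c \<cdot>\<^sub>m single_entry_mat n i j = 0\<^sub>m n n"
    using P Q by simp
  then have "(c \<cdot>\<^sub>m single_entry_mat n i j) $$ (i, j) = 0"
    using assms by simp
  then show "(Q * X * P) $$ (i, j) = 0"
    using assms by (simp add: single_entry_mat_def c_def)
next
  assume "(Q * X * P) $$ (i, j) = 0"
  then show "basis_proj n P Q i * X * basis_proj n P Q j = 0\<^sub>m n n"
    using P Q X assms by (auto simp: basis_proj_sandwich)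
qed

lemma basis_proj_mult:
  assumes "i < n" "j < n"
  shows "basis_proj n P Q i * basis_proj n P Q j = (if i = j then basis_proj n P Q i else 0\<^sub>m n n)"
proof -
  have "basis_proj n P Q i * basis_proj n P Q j = basis_proj n P Q i * 1\<^sub>m n * basis_proj n P Q j"
    by (simp add: right_mult_one_mat[OF basis_proj_carrier])
  also have "\<dots> = (if i = j then 1 else 0) \<cdot>\<^sub>m (P * single_entry_mat n i j * Q)"
    using P Q inverse assms by (simp add: basis_proj_sandwich)
  also have "\<dots> = (if i = j then basis_proj n P Q i else 0\<^sub>m n n)"
    using P Q by (auto simp: basis_proj_def)
  finally show ?thesis .
qed

lemma basis_proj_nonzero:
  assumes "i < n"
  shows "basis_proj n P Q i \<noteq> 0\<^sub>m n n"
proof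
  assume "basis_proj n P Q i = 0\<^sub>m n n"
  then have "basis_proj n P Q i * 1\<^sub>m n * basis_proj n P Q i = 0\<^sub>m n n"
    by simp
  then have "(Q * 1\<^sub>m n * P) $$ (i, i) = 0"
    using assms by (simp only: basis_proj_sandwich_eq_0_iff one_carrier_mat)
  then show False
    using P Q inverse assms by simp
qed

lemma basis_proj_sandwich_eq_0_iff_similar:
  assumes X: "X \<in> carrier_mat n n" and B: "B \<in> carrier_mat n n" and similar: "X * P = P * B"
    and "i < n" "j < n"
  shows "basis_proj n P Q i * X * basis_proj n P Q j = 0\<^sub>m n n \<longleftrightarrow> B $$ (i, j) = 0"
proof -
  have "Q * X * P = (Q * P) * B"
    using P Q X B by (simp add: assoc_mult_square similar)
  then have "Q * X * P = B"
    using B inverse by simp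
  then show ?thesis
    using X assms by (simp add: basis_proj_sandwich_eq_0_iff)
qed

end

end

section \<open>Leonard systems from two eigenbases\<close>

definition eigenbasis :: "nat \<Rightarrow> 'a::field mat \<Rightarrow> 'a mat \<Rightarrow> 'a mat \<Rightarrow> (nat \<Rightarrow> 'a) \<Rightarrow> bool" where
  "eigenbasis n A P Q \<theta> \<longleftrightarrow> P \<in> carrier_mat n n \<and> Q \<in> carrier_mat n n \<and> Q * P = 1\<^sub>m n \<and>
     A * P = P * mat_diag n \<theta>"

lemma prim_idem_seq_of_eigenbasis:
  assumes A: "A \<in> carrier_mat (d+1) (d+1)" and basis: "eigenbasis (d+1) A P Q \<theta>"
    and distinct: "inj_on \<theta> {..d}"
  shows "prim_idem_seq d A (basis_proj (d+1) P Q) \<theta>"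
proof -
  have P: "P \<in> carrier_mat (d+1) (d+1)" and Q: "Q \<in> carrier_mat (d+1) (d+1)"
    and inverse: "Q * P = 1\<^sub>m (d+1)" and eigen: "A * P = P * mat_diag (d+1) \<theta>"
    using basis by (simp_all add: eigenbasis_def)
  show ?thesis
    unfolding prim_idem_seq_def
    using A distinct msum_basis_proj[OF P Q inverse]
      eigen_basis_proj[OF P Q A eigen] basis_proj_nonzero[OF P Q inverse]
      basis_proj_mult[OF P Q inverse] basis_proj_carrier[OF P Q]
    by (simp del: msum.simps)
qed

lemma leonard_system_of_eigenbases:
  assumes A: "A \<in> carrier_mat (d+1) (d+1)" and As: "As \<in> carrier_mat (d+1) (d+1)"
    and A_basis: "eigenbasis (d+1) A P Q \<theta>" "inj_on \<theta> {..d}"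
    and As_in_A_basis: "As * P = P * Bs" "irred_tridiag (d+1) Bs"
    and As_basis: "eigenbasis (d+1) As P' Q' \<theta>s" "inj_on \<theta>s {..d}"
    and A_in_As_basis: "A * P' = P' * B" "irred_tridiag (d+1) B"
  shows "leonard_system d A (basis_proj (d+1) P Q) As (basis_proj (d+1) P' Q') \<theta> \<theta>s"
proof -
  have "B \<in> carrier_mat (d+1) (d+1)" "Bs \<in> carrier_mat (d+1) (d+1)"
    using A_in_As_basis As_in_A_basis by (simp_all add: irred_tridiag_def)
  moreover have "P \<in> carrier_mat (d+1) (d+1)" "Q \<in> carrier_mat (d+1) (d+1)" "Q * P = 1\<^sub>m (d+1)"
    "P' \<in> carrier_mat (d+1) (d+1)" "Q' \<in> carrier_mat (d+1) (d+1)" "Q' * P' = 1\<^sub>m (d+1)"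
    using A_basis As_basis by (simp_all add: eigenbasis_def)
  ultimately show ?thesis
    using assms
    by (auto simp: leonard_system_def prim_idem_seq_of_eigenbasis basis_proj_sandwich_eq_0_iff_similar
        irred_tridiag_def simp del: One_nat_def)
qed

lemma det_nonzero_of_left_inverse:
  assumes "P \<in> carrier_mat n n" "Q \<in> carrier_mat n n" "Q * P = 1\<^sub>m n"
  shows "det P \<noteq> 0"
proof -
  have "det Q * det P = 1"
    using assms by (metis det_mult det_one)
  then show ?thesis
    by auto
qed

lemma diag_matrix_mat_diag: "diag_matrix n (mat_diag n \<theta>)"
  by (simp add: diag_matrix_def mat_diag_def)

lemma leonard_pair_of_eigenbases:
  assumes A: "A \<in> carrier_mat (d+1) (d+1)" and As: "As \<in> carrier_mat (d+1) (d+1)"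
    and A_basis: "eigenbasis (d+1) A P Q \<theta>"
    and As_in_A_basis: "As * P = P * Bs" "irred_tridiag (d+1) Bs"
    and As_basis: "eigenbasis (d+1) As P' Q' \<theta>s"
    and A_in_As_basis: "A * P' = P' * B" "irred_tridiag (d+1) B"
  shows "leonard_pair d A As"
proof -
  have "det P \<noteq> 0" "det P' \<noteq> 0"
    using A_basis As_basis unfolding eigenbasis_def by (metis det_nonzero_of_left_inverse)+
  then show ?thesis
    using assms unfolding leonard_pair_def eigenbasis_def
    by (blast intro: diag_matrix_mat_diag)
qed

definition split_mat :: "nat \<Rightarrow> 'a::field mat \<Rightarrow> (nat \<Rightarrow> 'a) \<Rightarrow> 'a vec \<Rightarrow> 'a mat" where
  "split_mat n A \<theta> v = mat n n (\<lambda>(r, i). split_vec n A \<theta> v i $ r)"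

lemma split_step_carrier: "A - c \<cdot>\<^sub>m 1\<^sub>m n \<in> carrier_mat n n"
  by (rule minus_carrier_mat) simp

lemma split_vec_carrier: "v \<in> carrier_vec n \<Longrightarrow> split_vec n A \<theta> v i \<in> carrier_vec n"
  by (induction i) (auto intro: mult_mat_vec_carrier[OF split_step_carrier])

lemma split_vec_smult:
  assumes "v \<in> carrier_vec n"
  shows "split_vec n A \<theta> (c \<cdot>\<^sub>v v) i = c \<cdot>\<^sub>v split_vec n A \<theta> v i"
  using assms
  by (induction i) (auto simp: mult_mat_vec[OF split_step_carrier] split_vec_carrier)

lemma split_mat_smult:
  assumes "v \<in> carrier_vec n"
  shows "split_mat n A \<theta> (c \<cdot>\<^sub>v v) = c \<cdot>\<^sub>m split_mat n A \<theta> v"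
proof (rule eq_matI)
  fix r i assume "r < dim_row (c \<cdot>\<^sub>m split_mat n A \<theta> v)" "i < dim_col (c \<cdot>\<^sub>m split_mat n A \<theta> v)"
  then show "split_mat n A \<theta> (c \<cdot>\<^sub>v v) $$ (r, i) = (c \<cdot>\<^sub>m split_mat n A \<theta> v) $$ (r, i)"
    using assms split_vec_carrier[OF assms, of A \<theta> i] by (simp add: split_mat_def split_vec_smult)
qed (simp_all add: split_mat_def)

lemma first_split_seq_of_eigenbasis:
  assumes As: "As \<in> carrier_mat (d+1) (d+1)"
    and P: "P \<in> carrier_mat (d+1) (d+1)" and Q: "Q \<in> carrier_mat (d+1) (d+1)"
    and det: "det (split_mat (d+1) A \<theta> (col P 0)) \<noteq> 0"
    and split: "As * split_mat (d+1) A \<theta> (col P 0) = split_mat (d+1) A \<theta> (col P 0) * upper_bidiag (d+1) \<theta>s \<phi>"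
  shows "first_split_seq d A E As (basis_proj (d+1) P Q) \<theta> \<theta>s \<phi>"
  unfolding first_split_seq_def Let_def split_mat_def[symmetric]
proof (intro allI impI)
  fix v :: "'a vec"
  assume v: "v \<in> carrier_vec (d+1)" and nonzero: "v \<noteq> 0\<^sub>v (d+1)"
    and fixed: "basis_proj (d+1) P Q 0 *\<^sub>v v = v"
  let ?U = "split_mat (d+1) A \<theta> (col P 0)"
  define c where "c = row Q 0 \<bullet> v"
  have w: "col P 0 \<in> carrier_vec (d+1)"
    using P by (simp add: col_carrier_vec[of 0 "d+1"])
  have v_multiple: "v = c \<cdot>\<^sub>v col P 0"
    using fixed basis_proj_mult_vec[OF P Q _ v, of 0] by (simp add: c_def)
  then have "c \<noteq> 0"
    using nonzero P by auto
  have U: "split_mat (d+1) A \<theta> v = c \<cdot>\<^sub>m ?U"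
    by (subst v_multiple) (rule split_mat_smult[OF w])
  have U_carrier: "?U \<in> carrier_mat (d+1) (d+1)" and B_carrier: "upper_bidiag (d+1) \<theta>s \<phi> \<in> carrier_mat (d+1) (d+1)"
    by (simp_all add: split_mat_def upper_bidiag_def)
  have "det (split_mat (d+1) A \<theta> v) \<noteq> 0"
    using det \<open>c \<noteq> 0\<close> unfolding U by simp
  moreover have "As * split_mat (d+1) A \<theta> v = split_mat (d+1) A \<theta> v * upper_bidiag (d+1) \<theta>s \<phi>"
    using As U_carrier B_carrier split unfolding U
    by (simp add: mult_smult_distrib[of _ "d+1" "d+1" _ "d+1"] mult_smult_assoc_mat[of _ "d+1" "d+1" _ "d+1"])
  ultimately show "det (split_mat (d+1) A \<theta> v) \<noteq> 0 \<and>
      As * split_mat (d+1) A \<theta> v = split_mat (d+1) A \<theta> v * upper_bidiag (d+1) \<theta>s \<phi>" ..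
qed

section \<open>Explicit \<open>3 \<times> 3\<close> matrices\<close>

abbreviation mat3 :: "'a \<Rightarrow> 'a \<Rightarrow> 'a \<Rightarrow> 'a \<Rightarrow> 'a \<Rightarrow> 'a \<Rightarrow> 'a \<Rightarrow> 'a \<Rightarrow> 'a \<Rightarrow> 'a mat" where
  "mat3 a b c d e f g h i \<equiv> mat_of_rows_list 3 [[a, b, c], [d, e, f], [g, h, i]]"

abbreviation vec3 :: "'a \<Rightarrow> 'a \<Rightarrow> 'a \<Rightarrow> 'a vec" where
  "vec3 a b c \<equiv> vec 3 (\<lambda>k. [a, b, c] ! k)"

lemma less_3_cases: "(k::nat) < 3 \<longleftrightarrow> k = 0 \<or> k = 1 \<or> k = 2"
  by auto

lemma sum_3: "(\<Sum>k = 0..<3. f k) = f 0 + f 1 + f (2::nat)"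
  and sum_lessThan_3: "(\<Sum>k<3. f k) = f 0 + f 1 + f (2::nat)"
  by (simp_all add: numeral_3_eq_3 numeral_2_eq_2)

lemma mat3_carrier [simp]: "mat3 a b c d e f g h i \<in> carrier_mat 3 3"
  and dim_mat3 [simp]: "dim_row (mat3 a b c d e f g h i) = 3" "dim_col (mat3 a b c d e f g h i) = 3"
  by (simp_all add: mat_of_rows_list_def carrier_matI)

lemma index_mat3:
  "k < 3 \<Longrightarrow> l < 3 \<Longrightarrow> mat3 a b c d e f g h i $$ (k, l) = [[a, b, c], [d, e, f], [g, h, i]] ! k ! l"
  by (simp add: mat_of_rows_list_def)

lemma mat3_eq_iff:
  "mat3 a b c d e f g h i = mat3 a' b' c' d' e' f' g' h' i' \<longleftrightarrow>
    a = a' \<and> b = b' \<and> c = c' \<and> d = d' \<and> e = e' \<and> f = f' \<and> g = g' \<and> h = h' \<and> i = i'"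
  by (auto simp: mat_of_rows_list_def mat_eq_iff less_3_cases)

lemma mat3_mult:
  "mat3 a b c d e f g h i * mat3 a' b' c' d' e' f' g' h' i' =
    mat3 (a*a' + b*d' + c*g') (a*b' + b*e' + c*h') (a*c' + b*f' + c*i')
         (d*a' + e*d' + f*g') (d*b' + e*e' + f*h') (d*c' + e*f' + f*i')
         (g*a' + h*d' + i*g') (g*b' + h*e' + i*h') (g*c' + h*f' + i*i')"
  by (rule eq_matI) (auto simp: less_3_cases scalar_prod_def sum_3 index_mat3)

lemma mat3_diff:
  "mat3 a b c d e f g h i - mat3 a' b' c' d' e' f' g' h' i' =
    mat3 (a - a') (b - b') (c - c') (d - d') (e - e') (f - f') (g - g') (h - h') (i - i')"
  by (rule eq_matI) (auto simp: less_3_cases index_mat3)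

lemma smult_mat3:
  "x \<cdot>\<^sub>m mat3 a b c d e f g h i = mat3 (x*a) (x*b) (x*c) (x*d) (x*e) (x*f) (x*g) (x*h) (x*i)"
  by (rule eq_matI) (auto simp: less_3_cases index_mat3)

lemma one_mat3: "1\<^sub>m 3 = mat3 1 0 0 0 1 0 0 0 1"
  by (rule eq_matI) (auto simp: less_3_cases index_mat3)

lemma mat_3_eq_mat3:
  "mat 3 3 f = mat3 (f (0, 0)) (f (0, 1)) (f (0, 2)) (f (1, 0)) (f (1, 1)) (f (1, 2)) (f (2, 0)) (f (2, 1)) (f (2, 2))"
  by (rule eq_matI) (auto simp: less_3_cases index_mat3)

lemma mat3_mult_vec3:
  "mat3 a b c d e f g h i *\<^sub>v vec3 x y z = vec3 (a*x + b*y + c*z) (d*x + e*y + f*z) (g*x + h*y + i*z)"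
  by (rule eq_vecI) (auto simp: less_3_cases scalar_prod_def sum_3 row_def index_mat3)

lemma col_mat3_0: "col (mat3 a b c d e f g h i) 0 = vec3 a d g"
  by (rule eq_vecI) (auto simp: less_3_cases index_mat3)

lemma det_mat3:
  "det (mat3 a b c d e f g h i) = a * (e*i - f*h) - d * (b*i - c*h) + g * (b*f - c*e)"
proof -
  have det2: "det (mat 2 2 M) = M (0, 0) * M (1, 1) - M (1, 0) * M (0, 1)" for M :: "nat \<times> nat \<Rightarrow> 'a"
  proof -
    have "det (mat 2 2 M) = (\<Sum>k<2. mat 2 2 M $$ (k, 0) * cofactor (mat 2 2 M) k 0)"
      by (rule laplace_expansion_column) auto
    then show ?thesis
      by (simp add: cofactor_def numeral_2_eq_2 mat_delete_def det_single)
  qed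
  have "det (mat3 a b c d e f g h i) = (\<Sum>k<3. mat3 a b c d e f g h i $$ (k, 0) * cofactor (mat3 a b c d e f g h i) k 0)"
    by (rule laplace_expansion_column) auto
  then show ?thesis
    by (simp add: cofactor_def sum_lessThan_3 mat_delete_def det2 index_mat3)
       (simp add: algebra_simps)
qed

lemma irred_tridiag_mat3_iff:
  "irred_tridiag 3 (mat3 a b c d e f g h i) \<longleftrightarrow> c = 0 \<and> g = 0 \<and> b \<noteq> 0 \<and> d \<noteq> 0 \<and> f \<noteq> 0 \<and> h \<noteq> 0"
proof -
  have "(\<forall>k. k + 1 < (3::nat) \<longrightarrow> P k) \<longleftrightarrow> P 0 \<and> P 1" for P
    by (auto simp: less_Suc_eq numeral_3_eq_3)
  then show ?thesis
    unfolding irred_tridiag_def less_3_cases by (auto simp: index_mat3)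
qed

lemma upper_bidiag_3: "upper_bidiag 3 \<theta> \<phi> = mat3 (\<theta> 0) (\<phi> 1) 0 0 (\<theta> 1) (\<phi> 2) 0 0 (\<theta> 2)"
  by (simp add: upper_bidiag_def mat_3_eq_mat3)

lemma mat_diag_3: "mat_diag 3 \<theta> = mat3 (\<theta> 0) 0 0 0 (\<theta> 1) 0 0 0 (\<theta> 2)"
  by (simp add: mat_diag_def mat_3_eq_mat3)

lemma split_mat_3:
  assumes "u = (A - \<theta> 0 \<cdot>\<^sub>m 1\<^sub>m 3) *\<^sub>v v" "u' = (A - \<theta> 1 \<cdot>\<^sub>m 1\<^sub>m 3) *\<^sub>v u"
  shows "split_mat 3 A \<theta> v = mat3 (v $ 0) (u $ 0) (u' $ 0) (v $ 1) (u $ 1) (u' $ 1) (v $ 2) (u $ 2) (u' $ 2)"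
  using assms by (simp add: split_mat_def mat_3_eq_mat3 numeral_2_eq_2)

section \<open>The pair \<open>A, A*\<close>\<close>

lemma two_nonzero_of_CHAR:
  assumes "CHAR('a::field) \<noteq> 2"
  shows "(2::'a) \<noteq> 0"
proof
  assume "(2::'a) = 0"
  then have "CHAR('a) dvd 2"
    by (metis of_nat_eq_0_iff_char_dvd of_nat_numeral)
  moreover from this have "CHAR('a) \<noteq> 0"
    by (intro notI) simp
  moreover have "CHAR('a) \<noteq> Suc 0"
    by (rule CHAR_not_1)
  ultimately show False
    using assms dvd_imp_le[of "CHAR('a)" 2] by linarith
qed

locale leonard_pair_stz =
  fixes s t z :: "'a::field"
  assumes two_nonzero: "(2::'a) \<noteq> 0"
    and s_square: "s^2 \<noteq> 1" and t_square: "t^2 \<noteq> 1" and sum_nonzero: "s + t \<noteq> 0"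
begin

definition y1 :: 'a where "y1 = t * z + (1 - t^2) / (s + t)"
definition y2 :: 'a where "y2 = - s * z + (1 + s * t) / (s + t)"

definition A :: "'a mat" where "A = mat3 0 z 0 1 0 (1 - z) 0 1 0"
definition As :: "'a mat" where "As = mat3 0 y1 0 s 0 y2 0 t 0"

definition theta :: "nat \<Rightarrow> 'a" where "theta i = [1, 0, -1] ! i"

definition P_A :: "'a mat" where "P_A = mat3 z (1 - z) z 1 0 (-1) 1 (-1) 1"
definition Q_A :: "'a mat" where "Q_A = mat3 (1/2) (1/2) ((1 - z)/2) 1 0 (-z) (1/2) (-1/2) ((1 - z)/2)"
definition P_As :: "'a mat" where "P_As = mat3 y1 y2 y1 1 0 (-1) t (-s) t"
definition Q_As :: "'a mat" where "Q_As = mat3 (s/2) (1/2) (y2/2) t 0 (-y1) (s/2) (-1/2) (y2/2)"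

definition A_in_As_basis :: "'a mat" where
  "A_in_As_basis = mat3 ((1 + s*t)/(s + t)) ((1 - s^2)/(2*(s + t))) 0
     ((t^2 - 1)/(s + t)) 0 ((1 - t^2)/(s + t))
     0 (-(1 - s^2)/(2*(s + t))) (-(1 + s*t)/(s + t))"

definition As_in_A_basis :: "'a mat" where
  "As_in_A_basis = mat3 ((1 + s*t)/(s + t)) ((s^2 - 1)/(2*(s + t))) 0
     ((1 - t^2)/(s + t)) 0 ((t^2 - 1)/(s + t))
     0 ((1 - s^2)/(2*(s + t))) (-(1 + s*t)/(s + t))"

lemma squares_ne_1: "1 - s^2 \<noteq> 0" "s^2 - 1 \<noteq> 0" "1 - t^2 \<noteq> 0" "t^2 - 1 \<noteq> 0"
  using s_square t_square by auto

lemma four_nonzero: "(4::'a) \<noteq> 0"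
  using two_nonzero by (metis mult_eq_0_iff num_double numeral_times_numeral)

lemma double_sum_nonzero: "2 * s + 2 * t \<noteq> 0"
  using two_nonzero sum_nonzero by (metis distrib_left mult_eq_0_iff)

(* field_simps cannot cancel s + t once it is multiplied out in a product; after the
   substitution s = D - t every denominator is a power of D. *)
lemma sum_substitution:
  obtains D where "D \<noteq> 0" "s = D - t" "y1 = t * z + (1 - t^2) / D" "y2 = - (D - t) * z + (1 + (D - t) * t) / D"
  using sum_nonzero by (simp add: y1_def y2_def)

lemma theta_3: "mat_diag 3 theta = mat3 1 0 0 0 0 0 0 0 (-1)"
  by (simp add: mat_diag_3 theta_def)

lemma eigenbasis_A: "eigenbasis 3 A P_A Q_A theta"
  unfolding eigenbasis_def theta_3
  by (simp add: A_def P_A_def Q_A_def mat3_mult mat3_eq_iff one_mat3 two_nonzero field_simps)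

lemma eigenbasis_As: "eigenbasis 3 As P_As Q_As theta"
proof -
  obtain D where D: "D \<noteq> 0" "s = D - t" "y1 = t * z + (1 - t^2) / D" "y2 = - (D - t) * z + (1 + (D - t) * t) / D"
    by (rule sum_substitution)
  show ?thesis
    unfolding eigenbasis_def theta_3 As_def P_As_def Q_As_def mat3_mult mat3_eq_iff one_mat3 D(3,4)
    unfolding D(2) using D(1) two_nonzero four_nonzero by (simp add: field_simps power2_eq_square)
qed

lemma A_in_As_basis: "A * P_As = P_As * A_in_As_basis"
proof -
  obtain D where D: "D \<noteq> 0" "s = D - t" "y1 = t * z + (1 - t^2) / D" "y2 = - (D - t) * z + (1 + (D - t) * t) / D"
    by (rule sum_substitution)
  show ?thesis
    unfolding A_def P_As_def A_in_As_basis_def mat3_mult mat3_eq_iff D(3,4)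
    unfolding D(2) using D(1) two_nonzero four_nonzero by (simp add: field_simps power2_eq_square)
qed

lemma As_in_A_basis: "As * P_A = P_A * As_in_A_basis"
proof -
  obtain D where D: "D \<noteq> 0" "s = D - t" "y1 = t * z + (1 - t^2) / D" "y2 = - (D - t) * z + (1 + (D - t) * t) / D"
    by (rule sum_substitution)
  show ?thesis
    unfolding As_def P_A_def As_in_A_basis_def mat3_mult mat3_eq_iff D(3,4)
    unfolding D(2) using D(1) two_nonzero four_nonzero by (simp add: field_simps power2_eq_square)
qed

lemma irred_tridiag_A_in_As_basis: "irred_tridiag 3 A_in_As_basis"
  unfolding A_in_As_basis_def irred_tridiag_mat3_iff
  using double_sum_nonzero sum_nonzero squares_ne_1 by auto

lemma irred_tridiag_As_in_A_basis: "irred_tridiag 3 As_in_A_basis"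
  unfolding As_in_A_basis_def irred_tridiag_mat3_iff
  using double_sum_nonzero sum_nonzero squares_ne_1 by auto

lemma inj_theta: "inj_on theta {..2}"
  using two_nonzero by (auto simp: inj_on_def theta_def le_Suc_eq numeral_2_eq_2)

(* a = 1 gives the first split sequence, a = -1 the second one, for the reversed order of
   the eigenvalues of A; in both cases \<phi>\<^sub>i = (s - a)(t - a)/(s + t). *)
lemma split_relations:
  assumes "a = 1 \<or> a = -1" "th 0 = a" "th 1 = 0"
  shows "det (split_mat 3 A th (col P_As 0)) \<noteq> 0"
    and "As * split_mat 3 A th (col P_As 0) =
      split_mat 3 A th (col P_As 0) * upper_bidiag 3 theta (\<lambda>_. (s - a) * (t - a) / (s + t))"
proof -
  obtain D where D: "D \<noteq> 0" "s = D - t" "y1 = t * z + (1 - t^2) / D" "y2 = - (D - t) * z + (1 + (D - t) * t) / D"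
    by (rule sum_substitution)
  define u where "u = (A - th 0 \<cdot>\<^sub>m 1\<^sub>m 3) *\<^sub>v col P_As 0"
  define u' where "u' = (A - th 1 \<cdot>\<^sub>m 1\<^sub>m 3) *\<^sub>v u"
  have u: "u = vec3 (z - a * y1) (y1 - a + (1 - z) * t) (1 - a * t)"
    unfolding u_def A_def P_As_def col_mat3_0 one_mat3 smult_mat3 mat3_diff mat3_mult_vec3 assms(2)
    by simp
  have u': "u' = vec3 (z * (y1 - a + (1 - z) * t)) (z - a * y1 + (1 - z) * (1 - a * t)) (y1 - a + (1 - z) * t)"
    unfolding u'_def u A_def one_mat3 smult_mat3 mat3_diff mat3_mult_vec3 assms(3)
    by simp
  have U: "split_mat 3 A th (col P_As 0) = mat3 y1 (z - a * y1) (z * (y1 - a + (1 - z) * t))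
      1 (y1 - a + (1 - z) * t) (z - a * y1 + (1 - z) * (1 - a * t)) t (1 - a * t) (y1 - a + (1 - z) * t)"
    unfolding split_mat_3[OF u_def u'_def] unfolding u u' P_As_def col_mat3_0 by simp
  have "det (split_mat 3 A th (col P_As 0)) = - (s^2 - 1) * (t^2 - 1)^2 / (s + t)^3"
    using assms(1) unfolding U det_mat3 D(3,4) unfolding D(2)
    by (elim disjE) (use D(1) in \<open>simp_all add: field_simps power2_eq_square power3_eq_cube\<close>)
  then show "det (split_mat 3 A th (col P_As 0)) \<noteq> 0"
    using squares_ne_1 sum_nonzero by simp
  show "As * split_mat 3 A th (col P_As 0) =
      split_mat 3 A th (col P_As 0) * upper_bidiag 3 theta (\<lambda>_. (s - a) * (t - a) / (s + t))"
    using assms(1) unfolding U upper_bidiag_3 As_def mat3_mult mat3_eq_iff theta_def D(3,4) unfolding D(2)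
    by (elim disjE) (use D(1) in \<open>simp_all add: field_simps power2_eq_square\<close>)
qed

lemma carrier_A_As: "A \<in> carrier_mat 3 3" "As \<in> carrier_mat 3 3"
  by (simp_all add: A_def As_def)

lemma leonard_pair_A_As: "leonard_pair 2 A As"
  using leonard_pair_of_eigenbases[of A 2 As P_A Q_A theta As_in_A_basis P_As Q_As theta A_in_As_basis]
    carrier_A_As eigenbasis_A eigenbasis_As As_in_A_basis A_in_As_basis
    irred_tridiag_As_in_A_basis irred_tridiag_A_in_As_basis
  by simp

lemma parameter_array_A_As:
  "parameter_array_LP 2 A As theta theta
     (\<lambda>_. (s - 1) * (t - 1) / (s + t)) (\<lambda>_. (s + 1) * (t + 1) / (s + t))"
proof -
  let ?E = "basis_proj 3 P_A Q_A" and ?Es = "basis_proj 3 P_As Q_As"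
  have P_As: "P_As \<in> carrier_mat 3 3" "Q_As \<in> carrier_mat 3 3"
    using eigenbasis_As by (simp_all add: eigenbasis_def)
  have "leonard_system 2 A ?E As ?Es theta theta"
    using leonard_system_of_eigenbases[of A 2 As P_A Q_A theta As_in_A_basis P_As Q_As theta A_in_As_basis]
      carrier_A_As eigenbasis_A eigenbasis_As inj_theta As_in_A_basis A_in_As_basis
      irred_tridiag_As_in_A_basis irred_tridiag_A_in_As_basis
    by simp
  moreover have "first_split_seq 2 A ?E As ?Es theta theta (\<lambda>_. (s - 1) * (t - 1) / (s + t))"
    using first_split_seq_of_eigenbasis[of As 2 P_As Q_As A theta theta]
      carrier_A_As P_As split_relations[of 1 theta]
    by (simp add: theta_def)
  moreover have "first_split_seq 2 A (\<lambda>i. ?E (2 - i)) As ?Es (\<lambda>i. theta (2 - i)) theta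
      (\<lambda>_. (s + 1) * (t + 1) / (s + t))"
    using first_split_seq_of_eigenbasis[of As 2 P_As Q_As A "\<lambda>i. theta (2 - i)" theta]
      carrier_A_As P_As split_relations[of "-1" "\<lambda>i. theta (2 - i)"]
    by (simp add: theta_def)
  ultimately show ?thesis
    unfolding parameter_array_LP_def parameter_array_LS_def by blast
qed

end

theorem proposition4p5:
  fixes s t z :: "'a::alg_closed_field"
  assumes "CHAR('a) \<noteq> 2"
    and "s \<noteq> 0" "t \<noteq> 0" "z \<noteq> 0"
    and "s^2 \<noteq> 1" "t^2 \<noteq> 1" "s + t \<noteq> 0" "z \<noteq> 1"
  defines "y1 \<equiv> t * z + (1 - t^2) / (s + t)"
    and "y2 \<equiv> - s * z + (1 + s * t) / (s + t)"
  defines "A \<equiv> mat_of_rows_list 3 [[0, z, 0], [1, 0, 1 - z], [0, 1, 0]]"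
    and "As \<equiv> mat_of_rows_list 3 [[0, y1, 0], [s, 0, y2], [0, t, 0]]"
  shows "leonard_pair 2 A As \<and>
    parameter_array_LP 2 A As
      (\<lambda>i. [1, 0, -1] ! i) (\<lambda>i. [1, 0, -1] ! i)
      (\<lambda>i. (s - 1) * (t - 1) / (s + t)) (\<lambda>i. (s + 1) * (t + 1) / (s + t))"
proof -
  interpret leonard_pair_stz s t z
    using two_nonzero_of_CHAR[OF assms(1)] assms(5-7) by unfold_locales
  have "A = leonard_pair_stz.A z" "As = leonard_pair_stz.As s t z"
    unfolding assms(9-12) A_def As_def y1_def y2_def by simp_all
  moreover have "theta = (\<lambda>i. [1, 0, -1] ! i)"
    by (simp add: theta_def fun_eq_iff)
  ultimately show ?thesis
    using leonard_pair_A_As parameter_array_A_As by simp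
qed

end
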